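(* Let $\gamma:K^*\to K$ be a non-degenerate simplicial dynamical system on a polyhedron $X=X(K)$ of positive dimension $d$. For $s^*\in K^*$ let $\bar g_{s^*}:\gamma(s^* )\to s^*$ be the affine isomorphism inverse to the restriction to $s^*$ of the p.l. map $g$ associated with $\gamma$. Then for all $x_1,x_2$ in the simplex $\gamma(s^* )$, $$d_K(\bar g_{s^*}(x_1),\bar g_{s^*}(x_2))\le\left(1-\frac{\theta(K^*,K)}{d}\right)d_K(x_1,x_2).$$
   Context: $K$ is a simplicial complex with vertex set $V(K)$; each $x\in X(K)$ has barycentric coordinates $b_v(x)\ge0$, $v\in V(K)$, summing to $1$, with $x=\sum_vb_v(x)v$ and $\{v:b_v(x)>0\}$ spanning a simplex of $K$. The metric $d_K(x,y)=\sum_{v\in V(K)}|b_v(x)-b_v(y)|$. A subdivision $K^*$ of $K$ is a triangulation of the same polyhedron in which every simplex of $K$ is a union of simplices of $K^*$; it is proper if no simplex of $K^*$ meets two disjoint simplices of $K$. A simplicial dynamical system is a simplicial map $\gamma:K^*\to K$ (vertex map sending vertex sets of simplices onto vertex sets of simplices) with $K^*$ a proper subdivision of $K$; it is non-degenerate if $\dim\gamma(s^* )=\dim s^*$ for all $s^*\in K^*$ (i.e. $\gamma$ is injective on the vertices of each simplex). The associated p.l. map is $g(x)=\sum_{v\in V(K^* )}b^*_v(x)\gamma(v)$ with $b^*$ the $K^*$ barycentric coordinates. $\theta(K^*,K)=\min\{b_v(v^* ):v^*\in V(K^* ),v\in V(K),b_v(v^* )>0\}$. The dimension $d$ of $X$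 is the maximal dimension of a simplex of $K$. *)

theory Defs
  imports Complex_Main
begin

text \<open>Abstract simplicial complex: finite set of nonempty finite vertex sets,
  closed under nonempty subsets. Points of the polyhedron are represented by
  their barycentric coordinate functions.\<close>

definition simplicial_complex :: "'v set set \<Rightarrow> bool" where
  "simplicial_complex K \<longleftrightarrow> finite K \<and> (\<forall>s\<in>K. finite s \<and> s \<noteq> {}) \<and>
     (\<forall>s\<in>K. \<forall>t. t \<subseteq> s \<and> t \<noteq> {} \<longrightarrow> t \<in> K)"

definition polyhedron :: "'v set set \<Rightarrow> ('v \<Rightarrow> real) set" where
  "polyhedron K = {b. (\<forall>v. 0 \<le> b v) \<and> (\<forall>v. v \<notin> \<Union>K \<longrightarrow> b v = 0) \<and>
      sum b (\<Union>K) = 1 \<and> {v. 0 < b v} \<in> K}"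

definition ksimplex :: "'v set \<Rightarrow> ('v \<Rightarrow> real) set" where
  "ksimplex s = {b. (\<forall>v. 0 \<le> b v) \<and> (\<forall>v. v \<notin> s \<longrightarrow> b v = 0) \<and> sum b s = 1}"

definition dK :: "'v set set \<Rightarrow> ('v \<Rightarrow> real) \<Rightarrow> ('v \<Rightarrow> real) \<Rightarrow> real" where
  "dK K x y = (\<Sum>v\<in>\<Union>K. \<bar>x v - y v\<bar>)"

definition cdim :: "'v set set \<Rightarrow> nat" where
  "cdim K = Max (card ` K) - 1"

text \<open>A subdivision K* is an abstract complex with vertex type 'w together with the
  placement p of its vertices as points of X(K) (p w v = b_v(w)).\<close>
definition comb :: "('w \<Rightarrow> 'v \<Rightarrow> real) \<Rightarrow> 'w set \<Rightarrow> ('w \<Rightarrow> real) \<Rightarrow> ('v \<Rightarrow> real)" where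
  "comb p t c = (\<lambda>v. \<Sum>w\<in>t. c w * p w v)"

definition ssimplex :: "('w \<Rightarrow> 'v \<Rightarrow> real) \<Rightarrow> 'w set \<Rightarrow> ('v \<Rightarrow> real) set" where
  "ssimplex p t = {comb p t c | c. (\<forall>w\<in>t. 0 \<le> c w) \<and> sum c t = 1}"

definition subdivision :: "'v set set \<Rightarrow> 'w set set \<Rightarrow> ('w \<Rightarrow> 'v \<Rightarrow> real) \<Rightarrow> bool" where
  "subdivision K Ks p \<longleftrightarrow>
     simplicial_complex K \<and> simplicial_complex Ks \<and>
     inj_on p (\<Union>Ks) \<and> (\<forall>w\<in>\<Union>Ks. p w \<in> polyhedron K) \<and>
     \<comment> \<open>simplices of K* are nondegenerate (affinely independent vertices)\<close>
     (\<forall>t\<in>Ks. \<forall>c. sum c t = 0 \<and> comb p t c = (\<lambda>v. 0) \<longrightarrow> (\<forall>w\<in>t. c w = 0)) \<and>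
     \<comment> \<open>each simplex of K* lies (linearly) in a simplex of K\<close>
     (\<forall>t\<in>Ks. \<exists>s\<in>K. ssimplex p t \<subseteq> ksimplex s) \<and>
     \<comment> \<open>simplices of K* meet in common faces\<close>
     (\<forall>t1\<in>Ks. \<forall>t2\<in>Ks. ssimplex p t1 \<inter> ssimplex p t2 = ssimplex p (t1 \<inter> t2)) \<and>
     \<comment> \<open>same polyhedron\<close>
     \<Union>(ssimplex p ` Ks) = polyhedron K \<and>
     \<comment> \<open>every simplex of K is a union of simplices of K*\<close>
     (\<forall>s\<in>K. \<exists>T\<subseteq>Ks. ksimplex s = \<Union>(ssimplex p ` T))"

definition proper_subdivision :: "'v set set \<Rightarrow> 'w set set \<Rightarrow> ('w \<Rightarrow> 'v \<Rightarrow> real) \<Rightarrow> bool" where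
  "proper_subdivision K Ks p \<longleftrightarrow> subdivision K Ks p \<and>
     (\<forall>t\<in>Ks. \<forall>s1\<in>K. \<forall>s2\<in>K. s1 \<inter> s2 = {} \<longrightarrow>
        \<not> (ssimplex p t \<inter> ksimplex s1 \<noteq> {} \<and> ssimplex p t \<inter> ksimplex s2 \<noteq> {}))"

definition simplicial_dynamical_system ::
  "'v set set \<Rightarrow> 'w set set \<Rightarrow> ('w \<Rightarrow> 'v \<Rightarrow> real) \<Rightarrow> ('w \<Rightarrow> 'v) \<Rightarrow> bool" where
  "simplicial_dynamical_system K Ks p \<gamma> \<longleftrightarrow>
     proper_subdivision K Ks p \<and> (\<forall>t\<in>Ks. \<gamma> ` t \<in> K)"

definition nondegenerate :: "'w set set \<Rightarrow> ('w \<Rightarrow> 'v) \<Rightarrow> bool" where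
  "nondegenerate Ks \<gamma> \<longleftrightarrow> (\<forall>t\<in>Ks. card (\<gamma> ` t) = card t)"

definition bstar :: "'w set set \<Rightarrow> ('w \<Rightarrow> 'v \<Rightarrow> real) \<Rightarrow> ('v \<Rightarrow> real) \<Rightarrow> 'w \<Rightarrow> real" where
  "bstar Ks p x = (THE c. (\<forall>w. 0 \<le> c w) \<and> (\<forall>w. w \<notin> \<Union>Ks \<longrightarrow> c w = 0) \<and>
       sum c (\<Union>Ks) = 1 \<and> {w. 0 < c w} \<in> Ks \<and> comb p (\<Union>Ks) c = x)"

definition vtx :: "'v \<Rightarrow> ('v \<Rightarrow> real)" where
  "vtx v = (\<lambda>u. if u = v then 1 else 0)"

definition plmap :: "'w set set \<Rightarrow> ('w \<Rightarrow> 'v \<Rightarrow> real) \<Rightarrow> ('w \<Rightarrow> 'v) \<Rightarrow> ('v \<Rightarrow> real) \<Rightarrow> ('v \<Rightarrow> real)" where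
  "plmap Ks p \<gamma> x = (\<lambda>v. \<Sum>w\<in>\<Union>Ks. bstar Ks p x w * vtx (\<gamma> w) v)"

definition theta :: "'v set set \<Rightarrow> 'w set set \<Rightarrow> ('w \<Rightarrow> 'v \<Rightarrow> real) \<Rightarrow> real" where
  "theta K Ks p = Min {p w v | w v. w \<in> \<Union>Ks \<and> v \<in> \<Union>K \<and> 0 < p w v}"

end

theory Submission
  imports Defs
begin

text \<open>On \<open>\<gamma>(s\<^sup>*)\<close> the inverse of \<open>g\<close> sends \<open>x\<close> to \<open>\<Sum>\<^sub>w x(\<gamma> w) w\<close>, so the difference of two
  preimages is a combination \<open>\<Sum>\<^sub>w c\<^sub>w w\<close> of the vertices of \<open>s\<^sup>*\<close> with \<open>\<Sum>\<^sub>w c\<^sub>w = 0\<close>. Both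
  \<open>c\<^sup>+\<close> and \<open>c\<^sup>-\<close> have mass \<open>m = \<Sum>\<^sub>w |c\<^sub>w| / 2\<close>, and
  \<open>\<Sum>\<^sub>w c\<^sub>w w = (1/m) \<Sum>\<^sub>w\<^sub>,\<^sub>w\<^sub>' c\<^sup>+\<^sub>w c\<^sup>-\<^sub>w\<^sub>' (w - w')\<close>, so its \<open>d\<^sub>K\<close>-norm is at most \<open>m\<close> times the
  largest distance between two vertices of \<open>s\<^sup>*\<close>. Since the subdivision is proper, the supports of
  two vertices of \<open>s\<^sup>*\<close> share a vertex \<open>v\<close> of \<open>K\<close>, where both coordinates are at least \<open>\<theta>\<close>;
  hence \<open>d\<^sub>K(w, w') \<le> 2 - 2\<theta>\<close>. This gives the contraction factor \<open>1 - \<theta> \<le> 1 - \<theta>/d\<close>.\<close>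

subsection \<open>Zero-sum combinations in the \<open>\<ell>\<^sub>1\<close> norm\<close>

lemma zero_sum_comb_eq_pair_differences:
  fixes c f :: "'w \<Rightarrow> real"
  assumes "sum c S = 0"
  shows "(\<Sum>w\<in>S. max (c w) 0) * (\<Sum>w\<in>S. c w * f w)
       = (\<Sum>w\<in>S. \<Sum>w'\<in>S. max (c w) 0 * max (- c w') 0 * (f w - f w'))"
proof -
  define P where "P w = max (c w) 0" for w
  define N where "N w = max (- c w) 0" for w
  have cPN: "c w = P w - N w" for w by (simp add: P_def N_def)
  have mN: "sum N S = sum P S" using assms unfolding cPN by (simp add: sum_subtractf)
  have "(\<Sum>w\<in>S. \<Sum>w'\<in>S. P w * N w' * (f w - f w'))
      = (\<Sum>w\<in>S. P w * f w) * sum N S - sum P S * (\<Sum>w'\<in>S. N w' * f w')"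
    by (simp add: sum_distrib_left sum_distrib_right right_diff_distrib sum_subtractf mult_ac)
      (rule sum.swap)
  also have "\<dots> = sum P S * (\<Sum>w\<in>S. c w * f w)"
    by (simp add: mN cPN sum_subtractf left_diff_distrib right_diff_distrib mult.commute)
  finally show ?thesis by (simp add: P_def N_def)
qed

lemma sum_abs_zero_sum_comb_le:
  fixes c :: "'w \<Rightarrow> real" and p :: "'w \<Rightarrow> 'v \<Rightarrow> real"
  assumes fin: "finite S" and c0: "sum c S = 0"
    and diam: "\<And>w w'. w \<in> S \<Longrightarrow> w' \<in> S \<Longrightarrow> (\<Sum>v\<in>V. \<bar>p w v - p w' v\<bar>) \<le> D"
  shows "(\<Sum>v\<in>V. \<bar>\<Sum>w\<in>S. c w * p w v\<bar>) \<le> D / 2 * (\<Sum>w\<in>S. \<bar>c w\<bar>)"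
proof -
  define P where "P w = max (c w) 0" for w
  define N where "N w = max (- c w) 0" for w
  define m where "m = sum P S"
  have P0: "P w \<ge> 0" and N0: "N w \<ge> 0" for w by (simp_all add: P_def N_def)
  have "c w = P w - N w" for w by (simp add: P_def N_def)
  then have mN: "sum N S = m" using c0 unfolding m_def by (simp add: sum_subtractf)
  have abs_sum: "(\<Sum>w\<in>S. \<bar>c w\<bar>) = 2 * m"
  proof -
    have "\<bar>c w\<bar> = P w + N w" for w by (simp add: P_def N_def)
    then show ?thesis by (simp add: sum.distrib mN m_def)
  qed
  show ?thesis
  proof (cases "m = 0")
    case True
    then have "\<forall>w\<in>S. P w = 0 \<and> N w = 0"
      using mN fin P0 N0 unfolding m_def by (simp add: sum_nonneg_eq_0_iff)
    then have "\<forall>w\<in>S. c w = 0" by (auto simp: P_def N_def)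
    then show ?thesis by simp
  next
    case False
    then have m_pos: "m > 0" using P0 unfolding m_def by (simp add: sum_nonneg order_le_neq_trans)
    have "m * \<bar>\<Sum>w\<in>S. c w * p w v\<bar> = \<bar>\<Sum>w\<in>S. \<Sum>w'\<in>S. P w * N w' * (p w v - p w' v)\<bar>" for v
    proof -
      have "m * \<bar>\<Sum>w\<in>S. c w * p w v\<bar> = \<bar>m * (\<Sum>w\<in>S. c w * p w v)\<bar>"
        using m_pos by (simp add: abs_mult)
      then show ?thesis
        using zero_sum_comb_eq_pair_differences[OF c0, of "\<lambda>w. p w v"] by (simp add: P_def N_def m_def)
    qed
    then have "m * (\<Sum>v\<in>V. \<bar>\<Sum>w\<in>S. c w * p w v\<bar>)
        = (\<Sum>v\<in>V. \<bar>\<Sum>w\<in>S. \<Sum>w'\<in>S. P w * N w' * (p w v - p w' v)\<bar>)"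
      by (simp add: sum_distrib_left)
    also have "\<dots> \<le> (\<Sum>v\<in>V. \<Sum>w\<in>S. \<Sum>w'\<in>S. P w * N w' * \<bar>p w v - p w' v\<bar>)"
    proof (rule sum_mono)
      fix v
      have "\<bar>\<Sum>w\<in>S. \<Sum>w'\<in>S. P w * N w' * (p w v - p w' v)\<bar>
          \<le> (\<Sum>w\<in>S. \<Sum>w'\<in>S. \<bar>P w * N w' * (p w v - p w' v)\<bar>)"
        by (rule order_trans[OF sum_abs sum_mono[OF sum_abs]])
      then show "\<bar>\<Sum>w\<in>S. \<Sum>w'\<in>S. P w * N w' * (p w v - p w' v)\<bar>
          \<le> (\<Sum>w\<in>S. \<Sum>w'\<in>S. P w * N w' * \<bar>p w v - p w' v\<bar>)"
        using P0 N0 by (simp add: abs_mult)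
    qed
    also have "\<dots> = (\<Sum>w\<in>S. \<Sum>w'\<in>S. P w * N w' * (\<Sum>v\<in>V. \<bar>p w v - p w' v\<bar>))"
      by (simp add: sum_distrib_left sum.swap[of _ V])
    also have "\<dots> \<le> (\<Sum>w\<in>S. \<Sum>w'\<in>S. P w * N w' * D)"
      using diam P0 N0 by (intro sum_mono mult_left_mono) auto
    also have "\<dots> = m * (D * m)"
      by (simp add: sum_distrib_right[symmetric] sum_distrib_left[symmetric] mN m_def)
    finally have "(\<Sum>v\<in>V. \<bar>\<Sum>w\<in>S. c w * p w v\<bar>) \<le> D * m"
      using m_pos by simp
    then show ?thesis by (simp add: abs_sum)
  qed
qed

subsection \<open>Distances between points of the polyhedron\<close>

lemma sum_abs_diff_eq_two_minus_overlap:
  fixes a b :: "'v \<Rightarrow> real"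
  assumes "sum a V = 1" "sum b V = 1"
  shows "(\<Sum>v\<in>V. \<bar>a v - b v\<bar>) = 2 - 2 * (\<Sum>v\<in>V. min (a v) (b v))"
proof -
  have "(\<Sum>v\<in>V. \<bar>a v - b v\<bar>) = (\<Sum>v\<in>V. a v + b v - 2 * min (a v) (b v))"
    by (intro sum.cong) (auto simp: min_def)
  also have "\<dots> = 2 - 2 * (\<Sum>v\<in>V. min (a v) (b v))"
    using assms by (simp add: sum_subtractf sum.distrib sum_distrib_left)
  finally show ?thesis .
qed

lemma dK_le_two_minus_common_coordinate:
  assumes a: "a \<in> polyhedron K" and b: "b \<in> polyhedron K"
    and "v0 \<in> \<Union>K" "\<theta> \<le> a v0" "\<theta> \<le> b v0"
  shows "dK K a b \<le> 2 - 2 * \<theta>"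
proof -
  have sums: "sum a (\<Union>K) = 1" "sum b (\<Union>K) = 1" and nonneg: "\<forall>v. 0 \<le> a v \<and> 0 \<le> b v"
    using a b by (auto simp: polyhedron_def)
  then have "finite (\<Union>K)" by (metis sum.infinite zero_neq_one)
  then have "min (a v0) (b v0) \<le> (\<Sum>v\<in>\<Union>K. min (a v) (b v))"
    using nonneg \<open>v0 \<in> \<Union>K\<close> by (intro member_le_sum) auto
  then show ?thesis
    using sum_abs_diff_eq_two_minus_overlap[OF sums] assms(4,5) by (simp add: dK_def)
qed

lemma polyhedron_in_ksimplex_support:
  assumes "b \<in> polyhedron K"
  shows "b \<in> ksimplex {v. 0 < b v}"
proof -
  have nonneg: "\<forall>v. 0 \<le> b v" and out: "\<forall>v. v \<notin> \<Union>K \<longrightarrow> b v = 0" and sum1: "sum b (\<Union>K) = 1"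
    using assms by (auto simp: polyhedron_def)
  then have "finite (\<Union>K)" by (metis sum.infinite zero_neq_one)
  moreover have "{v. 0 < b v} \<subseteq> \<Union>K" using out by force
  ultimately have "sum b {v. 0 < b v} = sum b (\<Union>K)"
    using nonneg by (intro sum.mono_neutral_left) (auto simp: order_less_le)
  then show ?thesis using nonneg sum1 by (auto simp: ksimplex_def order_less_le)
qed

lemma dK_ksimplex_image:
  assumes fin: "finite (\<Union>K)" and sub: "\<gamma> ` s \<subseteq> \<Union>K" and inj: "inj_on \<gamma> s"
    and "x \<in> ksimplex (\<gamma> ` s)" "y \<in> ksimplex (\<gamma> ` s)"
  shows "dK K x y = (\<Sum>w\<in>s. \<bar>x (\<gamma> w) - y (\<gamma> w)\<bar>)"
proof -
  have "dK K x y = (\<Sum>v\<in>\<gamma> ` s. \<bar>x v - y v\<bar>)"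
    unfolding dK_def using assms(4,5)
    by (intro sum.mono_neutral_right[OF fin sub]) (auto simp: ksimplex_def)
  also have "\<dots> = (\<Sum>w\<in>s. \<bar>x (\<gamma> w) - y (\<gamma> w)\<bar>)" using sum.reindex[OF inj] by simp
  finally show ?thesis .
qed

lemma ksimplex_image_coords:
  assumes "inj_on \<gamma> s" "x \<in> ksimplex (\<gamma> ` s)"
  shows "\<forall>w\<in>s. 0 \<le> x (\<gamma> w)" "(\<Sum>w\<in>s. x (\<gamma> w)) = 1"
  using assms sum.reindex[OF assms(1), of x] by (auto simp: ksimplex_def)

subsection \<open>Barycentric coordinates in a subdivision\<close>

lemma comb_cong: "(\<And>w. w \<in> t \<Longrightarrow> c w = d w) \<Longrightarrow> comb p t c = comb p t d"
  unfolding comb_def by (auto intro!: sum.cong)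

lemma comb_mono_neutral:
  assumes "finite T" "t \<subseteq> T" "\<And>w. w \<in> T - t \<Longrightarrow> c w = 0"
  shows "comb p T c = comb p t c"
  unfolding comb_def using assms by (auto intro!: sum.mono_neutral_right ext)

lemma vertex_in_ssimplex:
  assumes "finite t" "w \<in> t"
  shows "p w \<in> ssimplex p t"
proof -
  have "comb p t (\<lambda>u. if u = w then 1 else 0) = p w"
  proof
    fix v
    have "(\<Sum>u\<in>t. (if u = w then 1 else 0) * p u v) = (\<Sum>u\<in>t. if u = w then p u v else 0)"
      by (rule sum.cong) auto
    then show "comb p t (\<lambda>u. if u = w then 1 else 0) v = p w v" unfolding comb_def using assms by simp
  qed
  moreover have "(\<Sum>u\<in>t. if u = w then 1 else (0::real)) = 1" using assms by simp
  ultimately show ?thesis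
    unfolding ssimplex_def by (intro CollectI exI[of _ "\<lambda>u. if u = w then 1 else 0"]) auto
qed

lemma subdivision_finite:
  assumes "subdivision K Ks p"
  shows "finite (\<Union>K)" "finite (\<Union>Ks)" "\<And>t. t \<in> Ks \<Longrightarrow> finite t"
  using assms by (auto simp: subdivision_def simplicial_complex_def)

lemma subdivision_face:
  assumes "subdivision K Ks p" "s \<in> Ks" "t \<subseteq> s" "t \<noteq> {}"
  shows "t \<in> Ks"
proof -
  have "simplicial_complex Ks" using assms(1) by (simp add: subdivision_def)
  then show ?thesis using assms(2-4) unfolding simplicial_complex_def by blast
qed

lemma subdivision_vertex_in_polyhedron:
  assumes "subdivision K Ks p" "w \<in> \<Union>Ks"
  shows "p w \<in> polyhedron K"
proof -
  have "\<forall>w\<in>\<Union>Ks. p w \<in> polyhedron K" using assms(1) by (simp add: subdivision_def)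
  then show ?thesis using assms(2) ..
qed

lemma subdivision_comb_inj:
  assumes sub: "subdivision K Ks p" and t: "t \<in> Ks"
    and "sum c t = sum d t" "comb p t c = comb p t d" "w \<in> t"
  shows "c w = d w"
proof -
  have "sum (\<lambda>w. c w - d w) t = 0" using assms(3) by (simp add: sum_subtractf)
  moreover have "comb p t (\<lambda>w. c w - d w) = (\<lambda>v. 0)"
    using fun_cong[OF assms(4)] by (auto simp: comb_def sum_subtractf left_diff_distrib)
  ultimately show ?thesis using sub t \<open>w \<in> t\<close> unfolding subdivision_def by fastforce
qed

lemma ssimplex_positive_coords_subset:
  assumes sub: "subdivision K Ks p" and t: "t \<in> Ks" and s: "s \<in> Ks"
    and pos: "\<forall>w\<in>t. 0 < c w" and c1: "sum c t = 1" and y: "comb p t c \<in> ssimplex p s"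
  shows "t \<subseteq> s"
proof
  fix w assume "w \<in> t"
  have "comb p t c \<in> ssimplex p t" unfolding ssimplex_def using pos c1 by force
  with y have "comb p t c \<in> ssimplex p (t \<inter> s)"
    using sub t s unfolding subdivision_def by blast
  then obtain f where f: "comb p t c = comb p (t \<inter> s) f" "sum f (t \<inter> s) = 1"
    unfolding ssimplex_def by blast
  define f' where "f' u = (if u \<in> s then f u else 0)" for u
  have ft: "finite t" using subdivision_finite(3)[OF sub t] .
  have "comb p t f' = comb p (t \<inter> s) f'"
    by (rule comb_mono_neutral) (use ft in \<open>auto simp: f'_def\<close>)
  also have "\<dots> = comb p t c" using f(1) by (auto intro: comb_cong simp: f'_def)
  finally have comb_eq: "comb p t c = comb p t f'" ..
  have "sum f' t = sum f' (t \<inter> s)"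
    by (rule sum.mono_neutral_right) (use ft in \<open>auto simp: f'_def\<close>)
  then have "sum c t = sum f' t" using f(2) c1 by (simp add: f'_def)
  then have "c w = f' w" using subdivision_comb_inj[OF sub t _ comb_eq \<open>w \<in> t\<close>] by simp
  with pos \<open>w \<in> t\<close> show "w \<in> s" by (auto simp: f'_def split: if_splits)
qed

definition star_coords :: "'w set set \<Rightarrow> ('w \<Rightarrow> 'v \<Rightarrow> real) \<Rightarrow> ('v \<Rightarrow> real) \<Rightarrow> ('w \<Rightarrow> real) \<Rightarrow> bool"
  where "star_coords Ks p x c \<longleftrightarrow> (\<forall>w. 0 \<le> c w) \<and> (\<forall>w. w \<notin> \<Union>Ks \<longrightarrow> c w = 0) \<and>
       sum c (\<Union>Ks) = 1 \<and> {w. 0 < c w} \<in> Ks \<and> comb p (\<Union>Ks) c = x"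

lemma star_coords_unique:
  assumes sub: "subdivision K Ks p" and s: "s \<in> Ks"
    and e0: "\<forall>w\<in>s. 0 \<le> e w" and e1: "sum e s = 1"
    and c: "star_coords Ks p (comb p s e) c"
  shows "c = (\<lambda>w. if w \<in> s then e w else 0)"
proof -
  define t where "t = {w. 0 < c w}"
  have t: "t \<in> Ks" and nonneg: "\<forall>w. 0 \<le> c w"
    using c by (auto simp: star_coords_def t_def)
  have fin: "finite (\<Union>Ks)" and fs: "finite s" using subdivision_finite(2,3)[OF sub] s by auto
  have zero: "c w = 0" if "w \<notin> t" for w using nonneg that t_def by (simp add: order_less_le)
  have tU: "t \<subseteq> \<Union>Ks" using t by blast
  have ct: "comb p t c = comb p s e"
    using c comb_mono_neutral[OF fin tU, of c p] zero by (auto simp: star_coords_def)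
  have st: "sum c t = 1"
    using c sum.mono_neutral_right[OF fin tU, of c] zero by (auto simp: star_coords_def)
  have "comb p s e \<in> ssimplex p s" unfolding ssimplex_def using e0 e1 by blast
  then have ts: "t \<subseteq> s"
    using ssimplex_positive_coords_subset[OF sub t s _ st] ct by (simp add: t_def)
  have "comb p s c = comb p s e"
    using comb_mono_neutral[OF fs ts, of c p] zero ct by auto
  moreover have "sum c s = sum e s"
    using sum.mono_neutral_right[OF fs ts, of c] zero st e1 by auto
  ultimately have "\<forall>w\<in>s. c w = e w"
    using subdivision_comb_inj[OF sub s] by blast
  moreover have "c w = 0" if "w \<notin> s" for w using zero ts that by blast
  ultimately show ?thesis by auto
qed

lemma bstar_comb:
  assumes sub: "subdivision K Ks p" and s: "s \<in> Ks"
    and e0: "\<forall>w\<in>s. 0 \<le> e w" and e1: "sum e s = 1"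
  shows "bstar Ks p (comb p s e) = (\<lambda>w. if w \<in> s then e w else 0)"
proof -
  define c where "c w = (if w \<in> s then e w else 0)" for w
  have fin: "finite (\<Union>Ks)" and sU: "s \<subseteq> \<Union>Ks" using subdivision_finite(2)[OF sub] s by auto
  obtain w0 where "w0 \<in> s" "e w0 \<noteq> 0" using e1 by (metis sum.neutral zero_neq_one)
  then have "w0 \<in> {w. 0 < c w}" using e0 by (simp add: c_def order_less_le)
  moreover have "{w. 0 < c w} \<subseteq> s" by (auto simp: c_def split: if_splits)
  ultimately have "{w. 0 < c w} \<in> Ks" using subdivision_face[OF sub s] by blast
  moreover have "sum c (\<Union>Ks) = 1"
    using sum.mono_neutral_right[OF fin sU, of c] e1 by (simp add: c_def)
  moreover have "comb p (\<Union>Ks) c = comb p s e"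
    using comb_mono_neutral[OF fin sU, of c p] comb_cong[of s c e p] by (simp add: c_def)
  moreover have "\<forall>w. 0 \<le> c w" "\<forall>w. w \<notin> \<Union>Ks \<longrightarrow> c w = 0" using e0 sU by (auto simp: c_def)
  ultimately have "star_coords Ks p (comb p s e) c" unfolding star_coords_def by blast
  moreover have "d = c" if "star_coords Ks p (comb p s e) d" for d
    using star_coords_unique[OF sub s e0 e1 that] by (simp add: c_def[abs_def])
  ultimately have "(THE c. star_coords Ks p (comb p s e) c) = c"
    by (rule the_equality)
  then show ?thesis unfolding bstar_def star_coords_def c_def .
qed

lemma plmap_comb:
  assumes sub: "subdivision K Ks p" and s: "s \<in> Ks"
    and e0: "\<forall>w\<in>s. 0 \<le> e w" and e1: "sum e s = 1"
  shows "plmap Ks p \<gamma> (comb p s e) = (\<lambda>v. \<Sum>w\<in>s. e w * vtx (\<gamma> w) v)"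
proof -
  have fin: "finite (\<Union>Ks)" and sU: "s \<subseteq> \<Union>Ks" using subdivision_finite(2)[OF sub] s by auto
  show ?thesis
    unfolding plmap_def bstar_comb[OF sub s e0 e1]
    by (rule ext, rule sum.mono_neutral_cong_right[OF fin sU]) auto
qed

lemma sum_vtx_image:
  assumes "finite s" "inj_on \<gamma> s"
  shows "(\<Sum>w\<in>s. e (\<gamma> w) * vtx (\<gamma> w) v) = (if v \<in> \<gamma> ` s then e v else 0)"
proof -
  have "(\<Sum>w\<in>s. e (\<gamma> w) * vtx (\<gamma> w) v) = (\<Sum>u\<in>\<gamma> ` s. e u * vtx u v)"
    using sum.reindex[OF assms(2), of "\<lambda>u. e u * vtx u v"] by simp
  also have "\<dots> = (\<Sum>u\<in>\<gamma> ` s. if u = v then e v else 0)"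
    by (intro sum.cong) (auto simp: vtx_def)
  finally show ?thesis using assms(1) by simp
qed

lemma plmap_comb_at_image:
  assumes sub: "subdivision K Ks p" and s: "s \<in> Ks" and inj: "inj_on \<gamma> s"
    and e0: "\<forall>w\<in>s. 0 \<le> e w" and e1: "sum e s = 1" and w: "w \<in> s"
  shows "plmap Ks p \<gamma> (comb p s e) (\<gamma> w) = e w"
proof -
  have "(\<Sum>u\<in>s. e u * vtx (\<gamma> u) (\<gamma> w)) = (\<Sum>u\<in>s. if u = w then e u else 0)"
    using inj w by (intro sum.cong) (auto simp: vtx_def inj_on_def)
  then show ?thesis
    using plmap_comb[OF sub s e0 e1] subdivision_finite(3)[OF sub s] w by simp
qed

lemma inj_on_plmap_ssimplex:
  assumes sub: "subdivision K Ks p" and s: "s \<in> Ks" and inj: "inj_on \<gamma> s"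
  shows "inj_on (plmap Ks p \<gamma>) (ssimplex p s)"
proof (rule inj_onI)
  fix z z' assume "z \<in> ssimplex p s" "z' \<in> ssimplex p s" and eq: "plmap Ks p \<gamma> z = plmap Ks p \<gamma> z'"
  then obtain e e' where e: "z = comb p s e" "\<forall>w\<in>s. 0 \<le> e w" "sum e s = 1"
    and e': "z' = comb p s e'" "\<forall>w\<in>s. 0 \<le> e' w" "sum e' s = 1"
    unfolding ssimplex_def by blast
  have "e w = e' w" if "w \<in> s" for w
    using plmap_comb_at_image[OF sub s inj e(2,3) that] plmap_comb_at_image[OF sub s inj e'(2,3) that]
      eq e(1) e'(1) by simp
  then show "z = z'" using e(1) e'(1) comb_cong by metis
qed

lemma inv_into_plmap_ssimplex:
  assumes sub: "subdivision K Ks p" and s: "s \<in> Ks" and inj: "inj_on \<gamma> s"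
    and x: "x \<in> ksimplex (\<gamma> ` s)"
  shows "inv_into (ssimplex p s) (plmap Ks p \<gamma>) x = comb p s (\<lambda>w. x (\<gamma> w))"
proof -
  note e = ksimplex_image_coords[OF inj x]
  have "plmap Ks p \<gamma> (comb p s (\<lambda>w. x (\<gamma> w))) = x"
    using plmap_comb[OF sub s e] sum_vtx_image[OF subdivision_finite(3)[OF sub s] inj] x
    by (auto simp: ksimplex_def)
  moreover have "comb p s (\<lambda>w. x (\<gamma> w)) \<in> ssimplex p s" unfolding ssimplex_def using e by blast
  ultimately show ?thesis
    using inv_into_f_f[OF inj_on_plmap_ssimplex[OF sub s inj]] by metis
qed

lemma proper_subdivision_vertex_supports_meet:
  assumes proper: "proper_subdivision K Ks p" and t: "t \<in> Ks" and w: "w \<in> t" and w': "w' \<in> t"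
  obtains v where "0 < p w v" "0 < p w' v"
proof -
  have sub: "subdivision K Ks p"
    and disjoint: "\<And>s1 s2. s1 \<in> K \<Longrightarrow> s2 \<in> K \<Longrightarrow> s1 \<inter> s2 = {} \<Longrightarrow>
        ssimplex p t \<inter> ksimplex s1 = {} \<or> ssimplex p t \<inter> ksimplex s2 = {}"
    using proper t by (auto simp: proper_subdivision_def)
  have meets: "p u \<in> ssimplex p t \<inter> ksimplex {v. 0 < p u v}" "{v. 0 < p u v} \<in> K" if "u \<in> t" for u
  proof -
    have "p u \<in> polyhedron K" using subdivision_vertex_in_polyhedron[OF sub] t that by blast
    then show "p u \<in> ssimplex p t \<inter> ksimplex {v. 0 < p u v}" "{v. 0 < p u v} \<in> K"
      using vertex_in_ssimplex[OF subdivision_finite(3)[OF sub t] that] polyhedron_in_ksimplex_support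
      by (auto simp: polyhedron_def)
  qed
  have "{v. 0 < p w v} \<inter> {v. 0 < p w' v} \<noteq> {}"
    using disjoint[OF meets(2)[OF w] meets(2)[OF w']] meets(1)[OF w] meets(1)[OF w'] by blast
  then show ?thesis using that by blast
qed

lemma finite_theta_set:
  assumes "subdivision K Ks p"
  shows "finite {p w v | w v. w \<in> \<Union>Ks \<and> v \<in> \<Union>K \<and> 0 < p w v}"
proof -
  have "{p w v | w v. w \<in> \<Union>Ks \<and> v \<in> \<Union>K \<and> 0 < p w v} \<subseteq> (\<lambda>(w, v). p w v) ` (\<Union>Ks \<times> \<Union>K)"
    by auto
  then show ?thesis using subdivision_finite(1,2)[OF assms] finite_subset by blast
qed

lemma theta_le:
  assumes sub: "subdivision K Ks p" and w: "w \<in> \<Union>Ks" and pos: "0 < p w v"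
  shows "theta K Ks p \<le> p w v"
proof -
  have "v \<in> \<Union>K"
    using subdivision_vertex_in_polyhedron[OF sub w] pos by (auto simp: polyhedron_def)
  then show ?thesis
    unfolding theta_def using w pos finite_theta_set[OF sub] by (intro Min_le) auto
qed

lemma theta_pos:
  assumes sub: "subdivision K Ks p" and t: "t \<in> Ks"
  shows "0 < theta K Ks p"
proof -
  have "t \<noteq> {}" using sub t by (simp add: subdivision_def simplicial_complex_def)
  then obtain w where w: "w \<in> \<Union>Ks" using t by blast
  have poly: "p w \<in> polyhedron K" using subdivision_vertex_in_polyhedron[OF sub w] .
  then have "sum (p w) (\<Union>K) = 1" by (simp add: polyhedron_def)
  then obtain v where v: "v \<in> \<Union>K" "p w v \<noteq> 0" by (metis sum.neutral zero_neq_one)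
  then have "0 < p w v" using poly by (simp add: polyhedron_def order_less_le)
  then have "{p w v | w v. w \<in> \<Union>Ks \<and> v \<in> \<Union>K \<and> 0 < p w v} \<noteq> {}" using w v by blast
  from Min_in[OF finite_theta_set[OF sub] this] show ?thesis by (auto simp: theta_def)
qed

subsection \<open>Contraction of the inverse branches\<close>

lemma dK_comb_le:
  assumes proper: "proper_subdivision K Ks p" and s: "s \<in> Ks" and sums: "sum e1 s = sum e2 s"
  shows "dK K (comb p s e1) (comb p s e2) \<le> (1 - theta K Ks p) * (\<Sum>w\<in>s. \<bar>e1 w - e2 w\<bar>)"
proof -
  have sub: "subdivision K Ks p" using proper by (simp add: proper_subdivision_def)
  have diam: "(\<Sum>v\<in>\<Union>K. \<bar>p w v - p w' v\<bar>) \<le> 2 - 2 * theta K Ks p"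
    if w: "w \<in> s" and w': "w' \<in> s" for w w'
  proof -
    obtain v where v: "0 < p w v" "0 < p w' v"
      using proper_subdivision_vertex_supports_meet[OF proper s w w'] .
    have ws: "w \<in> \<Union>Ks" "w' \<in> \<Union>Ks" using s w w' by blast+
    note poly = subdivision_vertex_in_polyhedron[OF sub ws(1)] subdivision_vertex_in_polyhedron[OF sub ws(2)]
    then have "v \<in> \<Union>K" using v(1) by (auto simp: polyhedron_def)
    from dK_le_two_minus_common_coordinate[OF poly this theta_le[OF sub ws(1) v(1)] theta_le[OF sub ws(2) v(2)]]
    show ?thesis by (simp add: dK_def)
  qed
  have "dK K (comb p s e1) (comb p s e2) = (\<Sum>v\<in>\<Union>K. \<bar>\<Sum>w\<in>s. (e1 w - e2 w) * p w v\<bar>)"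
    by (simp add: dK_def comb_def sum_subtractf left_diff_distrib)
  also have "\<dots> \<le> (2 - 2 * theta K Ks p) / 2 * (\<Sum>w\<in>s. \<bar>e1 w - e2 w\<bar>)"
    using sums subdivision_finite(3)[OF sub s]
    by (intro sum_abs_zero_sum_comb_le diam) (simp_all add: sum_subtractf)
  also have "\<dots> = (1 - theta K Ks p) * (\<Sum>w\<in>s. \<bar>e1 w - e2 w\<bar>)" by simp
  finally show ?thesis .
qed

theorem proposition4p8:
  fixes K :: "'v set set" and Ks :: "'w set set" and p :: "'w \<Rightarrow> 'v \<Rightarrow> real"
    and \<gamma> :: "'w \<Rightarrow> 'v" and s :: "'w set" and x1 x2 :: "'v \<Rightarrow> real"
  assumes "simplicial_dynamical_system K Ks p \<gamma>"
    and "nondegenerate Ks \<gamma>"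
    and "cdim K > 0"
    and "s \<in> Ks"
    and "x1 \<in> ksimplex (\<gamma> ` s)" and "x2 \<in> ksimplex (\<gamma> ` s)"
  shows "dK K (inv_into (ssimplex p s) (plmap Ks p \<gamma>) x1)
              (inv_into (ssimplex p s) (plmap Ks p \<gamma>) x2)
         \<le> (1 - theta K Ks p / real (cdim K)) * dK K x1 x2"
proof -
  have proper: "proper_subdivision K Ks p" and image: "\<gamma> ` s \<in> K"
    using assms(1,4) by (auto simp: simplicial_dynamical_system_def)
  have sub: "subdivision K Ks p" using proper by (simp add: proper_subdivision_def)
  have inj: "inj_on \<gamma> s"
    using assms(2,4) subdivision_finite(3)[OF sub] by (simp add: nondegenerate_def inj_on_iff_eq_card)
  have "dK K (inv_into (ssimplex p s) (plmap Ks p \<gamma>) x1) (inv_into (ssimplex p s) (plmap Ks p \<gamma>) x2)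
      \<le> (1 - theta K Ks p) * (\<Sum>w\<in>s. \<bar>x1 (\<gamma> w) - x2 (\<gamma> w)\<bar>)"
    unfolding inv_into_plmap_ssimplex[OF sub assms(4) inj assms(5)]
      inv_into_plmap_ssimplex[OF sub assms(4) inj assms(6)]
    using ksimplex_image_coords(2)[OF inj assms(5)] ksimplex_image_coords(2)[OF inj assms(6)]
    by (intro dK_comb_le[OF proper assms(4)]) simp
  also have "\<dots> = (1 - theta K Ks p) * dK K x1 x2"
    using dK_ksimplex_image[OF subdivision_finite(1)[OF sub] _ inj assms(5,6)] image by (simp add: Union_upper)
  also have "\<dots> \<le> (1 - theta K Ks p / real (cdim K)) * dK K x1 x2"
  proof (rule mult_right_mono)
    have "0 < theta K Ks p" using theta_pos[OF sub assms(4)] .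
    then show "1 - theta K Ks p \<le> 1 - theta K Ks p / real (cdim K)"
      using assms(3) by (simp add: divide_le_eq)
  qed (simp add: dK_def sum_nonneg)
  finally show ?thesis .
qed

end
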